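(* Let $a,b,k$ be positive integers with $\gcd(a,b)=1$. Define $a_1=a$, $a_2=b$, and $a_n=ka_{n-1}+a_{n-2}$ for $n\ge 3$. Let $(x_n)_{n\ge1}$ be the sequence $1,1,1,2,2,2,1,1,1,2,2,2,\ldots$ and $(y_n)_{n\ge1}$ the sequence $2,2,2,1,1,1,2,2,2,1,1,1,\ldots$ (blocks of three, alternating). (1) If $k$ is even, then the sequence $(\Gamma(a_n,a_{n+1}))_{n\ge1}$ is constant. (2) If $k$ is odd: (a) if $a$ and $b$ are both odd, then $(\Gamma(a_n,a_{n+1}))_{n\ge 3}$ equals $(x_n)_{n\ge1}$ or $(y_n)_{n\ge1}$; (b) if $a$ is odd and $b$ is even, then $(\Gamma(a_n,a_{n+1}))_{n\ge 2}$ equals $(x_n)_{n\ge1}$ or $(y_n)_{n\ge1}$; (c) if $a$ is even and $b$ is odd, then $(\Gamma(a_n,a_{n+1}))_{n\ge 1}$ equals $(x_n)_{n\ge1}$ or $(y_n)_{n\ge1}$.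
   Context: For relatively prime positive integers $p,q$, exactly one of the equations $px+qy=\frac{(p-1)(q-1)}{2}$ (Equation 1) and $px+qy+1=\frac{(p-1)(q-1)}{2}$ (Equation 2) has a solution in nonnegative integers $(x,y)$. For positive integers $a,b$ with $d=\gcd(a,b)$, $\Gamma(a,b)=1$ if Equation 1 with $(p,q)=(a/d,b/d)$ has a nonnegative integer solution, and $\Gamma(a,b)=2$ otherwise. A sequence indexed from $n\ge m$ "equals" $(x_n)_{n\ge1}$ means its $j$-th term (the one with index $n=m+j-1$) equals $x_j$ for all $j\ge1$. *)

theory Defs
  imports Main
begin

definition eq1_solvable :: "nat \<Rightarrow> nat \<Rightarrow> bool" where
  "eq1_solvable p q \<longleftrightarrow> (\<exists>x y::nat. p * x + q * y = ((p - 1) * (q - 1)) div 2)"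

definition Gamma :: "nat \<Rightarrow> nat \<Rightarrow> nat" where
  "Gamma a b = (let d = gcd a b in if eq1_solvable (a div d) (b div d) then 1 else 2)"

text \<open>seq0 a b k i is a_(i+1): a_1 = a, a_2 = b, a_n = k a_(n-1) + a_(n-2).\<close>
fun seq0 :: "nat \<Rightarrow> nat \<Rightarrow> nat \<Rightarrow> nat \<Rightarrow> nat" where
  "seq0 a b k 0 = a"
| "seq0 a b k (Suc 0) = b"
| "seq0 a b k (Suc (Suc i)) = k * seq0 a b k (Suc i) + seq0 a b k i"

definition recseq :: "nat \<Rightarrow> nat \<Rightarrow> nat \<Rightarrow> nat \<Rightarrow> nat" where
  "recseq a b k n = seq0 a b k (n - 1)"

definition xseq :: "nat \<Rightarrow> nat" where
  "xseq j = (if even ((j - 1) div 3) then 1 else 2)"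

definition yseq :: "nat \<Rightarrow> nat" where
  "yseq j = (if even ((j - 1) div 3) then 2 else 1)"

end

theory Submission
  imports Defs
begin

text \<open>For coprime \<open>p, q\<close> let \<open>N = (p - 1)(q - 1)/2\<close>. Since \<open>N + (N - 1) = p q - p - q\<close>,
  Sylvester's theorem says that exactly one of \<open>N\<close> and \<open>N - 1\<close> is a nonnegative combination
  of \<open>p\<close> and \<open>q\<close>, i.e. Equation 2 is the complement of Equation 1. Replacing \<open>q\<close> by \<open>q + p\<close>
  raises \<open>N\<close> by \<open>p (p - 1)/2\<close>, which is a multiple of \<open>p\<close> when \<open>p\<close> is odd (the solvable
  equation stays the same) and is \<open>p/2\<close> modulo \<open>p\<close> when \<open>p\<close> is even (it switches).
  Since \<open>a(n+2) = a(n) + k a(n+1)\<close>, the value of \<open>\<Gamma>\<close> therefore changes from \<open>(a(n), a(n+1))\<close>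
  to \<open>(a(n+1), a(n+2))\<close> exactly when \<open>k\<close> is odd and \<open>a(n+1)\<close> is even. For odd \<open>k\<close> the
  parities of the \<open>a(n)\<close> repeat with period 3 with one even term per period, which produces
  the blocks of three.\<close>

definition representable :: "nat \<Rightarrow> nat \<Rightarrow> nat \<Rightarrow> bool" where
  "representable p q n \<longleftrightarrow> (\<exists>x y. p * x + q * y = n)"

lemma representable_int_iff:
  "representable p q n \<longleftrightarrow> (\<exists>x y::int. 0 \<le> x \<and> 0 \<le> y \<and> int p * x + int q * y = int n)"
proof
  assume "representable p q n"
  then obtain x y where xy: "p * x + q * y = n" unfolding representable_def by blast
  have "int p * int x + int q * int y = int n" using arg_cong[where f = int, OF xy] by simp
  then show "\<exists>x y::int. 0 \<le> x \<and> 0 \<le> y \<and> int p * x + int q * y = int n"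
    by (intro exI[of _ "int x"] exI[of _ "int y"]) simp
next
  assume "\<exists>x y::int. 0 \<le> x \<and> 0 \<le> y \<and> int p * x + int q * y = int n"
  then obtain x y :: int where "0 \<le> x" "0 \<le> y" "int p * x + int q * y = int n" by blast
  then have "int (p * nat x + q * nat y) = int n" by simp
  then have "p * nat x + q * nat y = n" by (simp only: of_nat_eq_iff)
  then show "representable p q n" unfolding representable_def by blast
qed

lemma not_representable_both:
  assumes "coprime p q" and "0 < p" and "0 < q" and "n + m + p + q = p * q"
    and "representable p q n" and "representable p q m"
  shows False
proof -
  obtain x1 y1 x2 y2 where "p * x1 + q * y1 = n" and "p * x2 + q * y2 = m"
    using assms(5,6) unfolding representable_def by blast
  define X where "X = x1 + x2 + 1"
  define Y where "Y = y1 + y2 + 1"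
  have sum: "p * X + q * Y = p * q"
    using assms(4) \<open>p * x1 + q * y1 = n\<close> \<open>p * x2 + q * y2 = m\<close>
    unfolding X_def Y_def by (simp add: algebra_simps)
  then have "p dvd q * Y" and "q dvd p * X"
    using dvd_add_right_iff[of p "p * X" "q * Y"] dvd_add_left_iff[of q "q * Y" "p * X"] by simp_all
  then have "p dvd Y" and "q dvd X"
    using assms(1) by (simp_all add: coprime_dvd_mult_right_iff coprime_commute)
  then have "p \<le> Y" and "q \<le> X" unfolding X_def Y_def by (simp_all add: dvd_imp_le)
  then have "p * q + q * p \<le> p * X + q * Y" by (simp add: add_mono)
  with sum assms(2,3) show False by simp
qed

lemma representable_or_complement:
  assumes "coprime p q" and "0 < p" and "n + m + p + q = p * q"
  shows "representable p q n \<or> representable p q m"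
proof -
  obtain u v :: int where bezout: "u * int p + v * int q = 1"
    using assms(1) by (metis bezout_int coprime_int_iff coprime_iff_gcd_eq_1)
  define d where "d = v * int n div int p"
  define y where "y = v * int n mod int p"
  define x where "x = u * int n + int q * d"
  have "int p * d + y = v * int n" unfolding d_def y_def by simp
  then have "int p * x + int q * y = (u * int p + v * int q) * int n" unfolding x_def by algebra
  then have comb: "int p * x + int q * y = int n" using bezout by simp
  have "0 \<le> y" and "y < int p" unfolding y_def using assms(2) by simp_all
  show ?thesis
  proof (cases "0 \<le> x")
    case True
    then show ?thesis using comb \<open>0 \<le> y\<close> representable_int_iff by blast
  next
    case False
    have "int n + int m + int p + int q = int p * int q"
      using arg_cong[where f = int, OF assms(3)] by simp
    then have "int p * (- 1 - x) + int q * (int p - 1 - y) = int m"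
      using comb by (simp add: algebra_simps)
    moreover have "0 \<le> - 1 - x" and "0 \<le> int p - 1 - y" using False \<open>y < int p\<close> by simp_all
    ultimately show ?thesis using representable_int_iff by blast
  qed
qed

lemma representable_complement_iff:
  assumes "coprime p q" and "0 < p" and "0 < q" and "n + m + p + q = p * q"
  shows "representable p q m \<longleftrightarrow> \<not> representable p q n"
  using not_representable_both[OF assms] representable_or_complement[OF assms(1,2,4)] by blast

lemma even_diff_one_mult_diff_one:
  fixes p q :: nat
  assumes "coprime p q"
  shows "even ((p - 1) * (q - 1))"
proof -
  have "odd p \<or> odd q" using coprime_common_divisor_nat[OF assms, of 2] by auto
  then show ?thesis by auto
qed

lemma eq1_solvable_iff_representable:
  "eq1_solvable p q \<longleftrightarrow> representable p q ((p - 1) * (q - 1) div 2)"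
  unfolding eq1_solvable_def representable_def by simp

text \<open>The guard \<open>0 < N\<close> is needed because \<open>N - 1\<close> truncates to \<open>0\<close> when \<open>N = 0\<close>.\<close>

lemma not_eq1_solvable_iff:
  fixes p q :: nat
  assumes "coprime p q" and "0 < p" and "0 < q"
  defines "N \<equiv> (p - 1) * (q - 1) div 2"
  shows "\<not> eq1_solvable p q \<longleftrightarrow> 0 < N \<and> representable p q (N - 1)"
proof (cases "N = 0")
  case True
  then show ?thesis
    unfolding eq1_solvable_iff_representable N_def[symmetric] representable_def by auto
next
  case False
  have "2 * N = (p - 1) * (q - 1)"
    unfolding N_def using even_diff_one_mult_diff_one[OF assms(1)] by simp
  then have "N + (N - 1) + p + q = p * q" using False assms(2,3) by (cases p; cases q) simp_all
  then show ?thesis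
    using representable_complement_iff[OF assms(1-3)] False
    unfolding eq1_solvable_iff_representable N_def[symmetric] by blast
qed

lemma representable_add_left_odd:
  assumes "odd p" and "0 < q" and "representable p q n" and "2 * n \<le> (p - 1) * (q - 1)"
  shows "representable p (q + p) (n + p * ((p - 1) div 2))"
proof -
  obtain x y where xy: "p * x + q * y = n" using assms(3) unfolding representable_def by blast
  have "q * (2 * y) \<le> q * (p - 1)"
    using assms(4) xy by (simp add: algebra_simps)
  then have "y \<le> (p - 1) div 2" using assms(1,2) by simp
  then have "p * ((p - 1) div 2 - y) + p * y = p * ((p - 1) div 2)" by (simp flip: distrib_left)
  then have "p * (x + ((p - 1) div 2 - y)) + (q + p) * y = n + p * ((p - 1) div 2)"
    using xy unfolding distrib_left distrib_right by linarith
  then show ?thesis unfolding representable_def by blast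
qed

lemma not_representable_both_add_left_even:
  assumes "even p" and "0 < p" and "0 < q" and "coprime p q"
    and "2 * n \<le> (p - 1) * (q - 1)"
    and "representable p q n" and "representable p (q + p) (n + p * (p - 1) div 2)"
  shows False
proof -
  obtain h where p: "p = 2 * h" using assms(1) by blast
  obtain x y where xy: "p * x + q * y = n" using assms(6) unfolding representable_def by blast
  obtain x' y' where xy': "p * x' + (q + p) * y' = n + p * (p - 1) div 2"
    using assms(7) unfolding representable_def by blast
  have "2 * (q * y) \<le> (p - 1) * (q - 1)" using assms(5) xy by linarith
  also have "\<dots> \<le> (p - 1) * q" by simp
  also have "\<dots> < p * q" using assms(2,3) by simp
  finally have "y < h" using p by simp
  have "2 * ((q + p) * y') \<le> (p - 1) * (q - 1) + p * (p - 1)"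
    using assms(5) xy' p by simp
  also have "\<dots> < p * q + p * p"
    using assms(2,3) by (intro add_less_le_mono) (simp_all add: mult_strict_mono)
  finally have "(q + p) * (2 * y') < (q + p) * p" by (simp add: algebra_simps)
  then have "y' < h" using p by simp
  \<comment> \<open>modulo \<open>h\<close> the two representations force \<open>y = y'\<close>, and then \<open>2 h\<close> would divide \<open>h (2 h - 1)\<close>\<close>
  have key: "int q * (int y' - int y) = int h * (2 * int h - 1 + 2 * (int x - int x' - int y'))"
  proof -
    have "int p * int x + int q * int y = int n" using arg_cong[where f = int, OF xy] by simp
    moreover have "int (p * (p - 1) div 2) = int h * (2 * int h - 1)"
      using p assms(2) by (simp add: of_nat_diff)
    then have "int p * int x' + (int q + int p) * int y' = int n + int h * (2 * int h - 1)"
      using arg_cong[where f = int, OF xy'] by simp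
    ultimately show ?thesis using p by (simp add: algebra_simps)
  qed
  have "coprime (int h) (int q)" using assms(4) p by simp
  then have "int h dvd int y' - int y" using dvdI[OF key] by (simp add: coprime_dvd_mult_right_iff)
  moreover have "\<bar>int y' - int y\<bar> < int h" using \<open>y < h\<close> \<open>y' < h\<close> by linarith
  ultimately have "y' = y" using dvd_imp_le_int[of "int y' - int y" "int h"] by linarith
  then have "2 * int h - 1 + 2 * (int x - int x' - int y') = 0" using key assms(2) p by simp
  then show False by presburger
qed

lemma coprime_add_mult_right_iff: "coprime (p::nat) (q + k * p) \<longleftrightarrow> coprime p q"
proof -
  have "q + k * p = k * p + q" by simp
  then show ?thesis by (simp only: coprime_iff_gcd_eq_1 gcd_add_mult)
qed

lemma div_2_diff_one_mult_add_left:
  fixes p q :: nat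
  assumes "coprime p q" and "0 < q"
  shows "(p - 1) * (q + p - 1) div 2 = (p - 1) * (q - 1) div 2 + p * (p - 1) div 2"
proof -
  have "q + p - 1 = (q - 1) + p" using assms(2) by simp
  then have "(p - 1) * (q + p - 1) = (p - 1) * (q - 1) + p * (p - 1)"
    by (simp add: distrib_left mult.commute)
  then show ?thesis
    using even_diff_one_mult_diff_one[OF assms(1)] by (simp add: div_plus_div_distrib_dvd_left)
qed

lemma eq1_solvable_add_left:
  assumes "coprime p q" and "0 < p" and "0 < q"
  shows "eq1_solvable p (q + p) \<longleftrightarrow> (eq1_solvable p q \<longleftrightarrow> odd p)"
proof -
  define N where "N = (p - 1) * (q - 1) div 2"
  define N' where "N' = (p - 1) * (q + p - 1) div 2"
  have "coprime p (q + p)" using assms(1) coprime_add_mult_right_iff[of p q 1] by simp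
  note dich = not_eq1_solvable_iff[OF assms, folded N_def]
  note dich' = not_eq1_solvable_iff[OF \<open>coprime p (q + p)\<close> assms(2) add_pos_pos[OF assms(3,2)],
      folded N'_def]
  have N': "N' = N + p * (p - 1) div 2"
    unfolding N_def N'_def by (rule div_2_diff_one_mult_add_left[OF assms(1,3)])
  have bound: "2 * N \<le> (p - 1) * (q - 1)" unfolding N_def by simp
  then have bound_pred: "2 * (N - 1) \<le> (p - 1) * (q - 1)" by arith
  show ?thesis
  proof (cases "odd p")
    case True
    then have N'_odd: "N' = N + p * ((p - 1) div 2)" using N' by (simp add: div_mult_swap)
    have "eq1_solvable p q \<Longrightarrow> eq1_solvable p (q + p)"
      using representable_add_left_odd[OF True assms(3) _ bound] N'_odd
      by (simp add: eq1_solvable_iff_representable N_def N'_def)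
    moreover have "\<not> eq1_solvable p q \<Longrightarrow> \<not> eq1_solvable p (q + p)"
      using representable_add_left_odd[OF True assms(3) _ bound_pred] dich dich' N'_odd by simp
    ultimately show ?thesis using True by blast
  next
    case False
    then have "even p" by simp
    note excl = not_representable_both_add_left_even[OF this assms(2,3,1)]
    have "eq1_solvable p q \<Longrightarrow> \<not> eq1_solvable p (q + p)"
      using excl[OF bound] N'
      unfolding eq1_solvable_iff_representable N_def[symmetric] N'_def[symmetric] by blast
    moreover have "\<not> eq1_solvable p q \<Longrightarrow> eq1_solvable p (q + p)"
    proof -
      assume "\<not> eq1_solvable p q"
      then have "0 < N" and "representable p q (N - 1)" using dich by auto
      then have "\<not> representable p (q + p) (N - 1 + p * (p - 1) div 2)"
        using excl[OF bound_pred] by blast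
      moreover have "N' - 1 = N - 1 + p * (p - 1) div 2" using N' \<open>0 < N\<close> by simp
      ultimately show ?thesis using dich' by simp
    qed
    ultimately show ?thesis using False by blast
  qed
qed

lemma eq1_solvable_add_mult_left:
  assumes "coprime p q" and "0 < p" and "0 < q"
  shows "eq1_solvable p (q + k * p) \<longleftrightarrow> (eq1_solvable p q \<longleftrightarrow> odd p \<or> even k)"
proof (induction k)
  case 0
  then show ?case by simp
next
  case (Suc k)
  have "eq1_solvable p (q + Suc k * p) \<longleftrightarrow> eq1_solvable p ((q + k * p) + p)"
    by (simp add: algebra_simps)
  also have "\<dots> \<longleftrightarrow> (eq1_solvable p (q + k * p) \<longleftrightarrow> odd p)"
    using eq1_solvable_add_left assms coprime_add_mult_right_iff by simp
  finally show ?case using Suc.IH by auto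
qed

lemma eq1_solvable_commute: "eq1_solvable p q \<longleftrightarrow> eq1_solvable q p"
  unfolding eq1_solvable_def by (metis add.commute mult.commute)

lemma Gamma_coprime: "coprime p q \<Longrightarrow> Gamma p q = (if eq1_solvable p q then 1 else 2)"
  unfolding Gamma_def by (simp add: coprime_iff_gcd_eq_1)

lemma seq0_pos: "0 < a \<Longrightarrow> 0 < b \<Longrightarrow> 0 < seq0 a b k i"
  by (induction a b k i rule: seq0.induct) auto

lemma seq0_Suc_Suc': "seq0 a b k (Suc (Suc i)) = seq0 a b k i + k * seq0 a b k (Suc i)"
  by simp

lemma coprime_seq0_Suc: "coprime a b \<Longrightarrow> coprime (seq0 a b k i) (seq0 a b k (Suc i))"
proof (induction i)
  case (Suc i)
  then show ?case
    unfolding seq0_Suc_Suc' using coprime_add_mult_right_iff coprime_commute by blast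
qed simp

lemma eq1_solvable_seq0_Suc:
  assumes "0 < a" and "0 < b" and "coprime a b"
  shows "eq1_solvable (seq0 a b k (Suc i)) (seq0 a b k (Suc (Suc i))) \<longleftrightarrow>
    (eq1_solvable (seq0 a b k i) (seq0 a b k (Suc i)) \<longleftrightarrow> odd (seq0 a b k (Suc i)) \<or> even k)"
proof -
  have "coprime (seq0 a b k (Suc i)) (seq0 a b k i)"
    using coprime_seq0_Suc[OF assms(3)] coprime_commute by blast
  then show ?thesis
    unfolding seq0_Suc_Suc' eq1_solvable_commute[of "seq0 a b k i"]
    by (rule eq1_solvable_add_mult_left[OF _ seq0_pos[OF assms(1,2)] seq0_pos[OF assms(1,2)]])
qed

lemma eq1_solvable_seq0_even:
  assumes "0 < a" and "0 < b" and "coprime a b" and "even k"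
  shows "eq1_solvable (seq0 a b k i) (seq0 a b k (Suc i)) \<longleftrightarrow> eq1_solvable a b"
proof (induction i)
  case (Suc i)
  then show ?case using eq1_solvable_seq0_Suc[OF assms(1-3), of k i] assms(4) by simp
qed simp

text \<open>For odd \<open>k\<close> the parities follow the Fibonacci pattern modulo 2; when \<open>a\<close>, \<open>b\<close> are not
  both even, exactly one term in three is even, \<open>r\<close> being the index of the first one.\<close>

lemma even_seq0_iff_mod_3:
  assumes "odd k" and "r < 3" and "even a \<longleftrightarrow> r = 0" and "even b \<longleftrightarrow> r = 1"
  shows "even (seq0 a b k i) \<longleftrightarrow> i mod 3 = r"
proof -
  have "(even (seq0 a b k i) \<longleftrightarrow> i mod 3 = r) \<and> (even (seq0 a b k (Suc i)) \<longleftrightarrow> Suc i mod 3 = r)"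
  proof (induction i)
    case (Suc i)
    have "Suc (Suc i) mod 3 = r \<longleftrightarrow> (Suc i mod 3 = r \<longleftrightarrow> i mod 3 = r)"
      using assms(2) by (cases "i mod 3 = 0"; cases "i mod 3 = 1"; cases "r = 0"; cases "r = 1";
          simp add: mod_Suc)
    with Suc show ?case using assms(1) by simp
  qed (use assms in auto)
  then show ?thesis by blast
qed

lemma eq1_solvable_seq0_odd:
  assumes "0 < a" and "0 < b" and "coprime a b"
    and "odd k" and "r < 3" and "even a \<longleftrightarrow> r = 0" and "even b \<longleftrightarrow> r = 1"
  shows "eq1_solvable (seq0 a b k (i + r)) (seq0 a b k (Suc (i + r))) \<longleftrightarrow>
    (eq1_solvable (seq0 a b k r) (seq0 a b k (Suc r)) \<longleftrightarrow> even (i div 3))"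
proof (induction i)
  case (Suc i)
  have "even (seq0 a b k (Suc (i + r))) \<longleftrightarrow> Suc i mod 3 = 0"
    using even_seq0_iff_mod_3[OF assms(4-7), of "Suc (i + r)"] assms(5) by presburger
  moreover have "even (Suc i div 3) \<longleftrightarrow> (even (i div 3) \<longleftrightarrow> Suc i mod 3 \<noteq> 0)" by presburger
  ultimately show ?case
    unfolding add_Suc eq1_solvable_seq0_Suc[OF assms(1-3)] using Suc assms(4) by argo
qed simp

lemma xseq_or_yseq:
  assumes "\<And>j. 1 \<le> j \<Longrightarrow> f j = (if c \<longleftrightarrow> even ((j - 1) div 3) then 1 else 2)"
  shows "(\<forall>j\<ge>1. f j = xseq j) \<or> (\<forall>j\<ge>1. f j = yseq j)"
  using assms by (cases c) (simp_all add: xseq_def yseq_def)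

theorem theorem5p2:
  fixes a b k :: nat
  assumes "a > 0" and "b > 0" and "k > 0" and "coprime a b"
  defines "G \<equiv> (\<lambda>n. Gamma (recseq a b k n) (recseq a b k (n + 1)))"
  shows "(even k \<longrightarrow> (\<exists>c. \<forall>n\<ge>1. G n = c))
       \<and> (odd k \<longrightarrow>
           (odd a \<and> odd b \<longrightarrow>
              (\<forall>j\<ge>1. G (j + 2) = xseq j) \<or> (\<forall>j\<ge>1. G (j + 2) = yseq j))
         \<and> (odd a \<and> even b \<longrightarrow>
              (\<forall>j\<ge>1. G (j + 1) = xseq j) \<or> (\<forall>j\<ge>1. G (j + 1) = yseq j))
         \<and> (even a \<and> odd b \<longrightarrow>
              (\<forall>j\<ge>1. G j = xseq j) \<or> (\<forall>j\<ge>1. G j = yseq j)))"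
proof -
  define E where "E i = eq1_solvable (seq0 a b k i) (seq0 a b k (Suc i))" for i
  have G_E: "G (Suc i) = (if E i then 1 else 2)" for i
    unfolding G_def E_def recseq_def by (simp add: Gamma_coprime[OF coprime_seq0_Suc[OF assms(4)]])
  have G_constant: "\<forall>n\<ge>1. G n = (if eq1_solvable a b then 1 else 2)" if "even k"
    using G_E eq1_solvable_seq0_even[OF assms(1,2,4) that] unfolding E_def
    by (metis Suc_le_D One_nat_def)
  have G_periodic: "(\<forall>j\<ge>1. G (j + r) = xseq j) \<or> (\<forall>j\<ge>1. G (j + r) = yseq j)"
    if "odd k" "r < 3" "even a \<longleftrightarrow> r = 0" "even b \<longleftrightarrow> r = 1" for r
  proof (rule xseq_or_yseq)
    fix j :: nat
    assume "1 \<le> j"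
    then have "Suc (j - 1 + r) = j + r" by simp
    then have "G (j + r) = (if E (j - 1 + r) then 1 else 2)" using G_E[of "j - 1 + r"] by metis
    moreover have "E (j - 1 + r) \<longleftrightarrow> (E r \<longleftrightarrow> even ((j - 1) div 3))"
      unfolding E_def by (rule eq1_solvable_seq0_odd[OF assms(1,2,4) that])
    ultimately show "G (j + r) = (if E r \<longleftrightarrow> even ((j - 1) div 3) then 1 else 2)" by simp
  qed
  show ?thesis
    using G_constant G_periodic[of 0] G_periodic[of 1] G_periodic[of 2] by auto
qed

end
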